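(* Let $f\colon 2^{\mathcal{N}}\to\mathbb{R}$ be non-negative and submodular, $k$ a positive integer, $t_s\in[0,1]$, $c=\lceil t_s k\rceil$, $\alpha=1-1/k$, and $Z\subseteq\mathcal{N}$. Assume $\mathcal{N}\setminus Z$ contains at least $2k$ dummy elements (elements $d$ with $f(A\cup\{d\})=f(A)$ for all $A$). Consider the random sets $S_0,\dots,S_k$ produced by the Guided Random Greedy procedure defined below, and let $\mathrm{OPT}\in\arg\max\{f(T):|T|\le k\}$. Then for every integer $1\le i\le c$, \[ \mathbb{E}[f(S_i)]\ \ge\ (1-\alpha^i)\,f(\mathrm{OPT}\setminus Z)-\Big(1-\alpha^i-\tfrac{i}{k}\alpha^{i-1}\Big) f(\mathrm{OPT}\cup Z)+\alpha^i f(S_0), \] and for every integer $c+1\le i\le k$, \[ \mathbb{E}[f(S_i)]\ \ge\ \frac{i-c}{k}\,\alpha^{i-c-1} f(\mathrm{OPT})-\frac{i-c}{k}\big(\alpha^{i-c-1}-\alpha^{i-1}\big) f(\mathrm{OPT}\cup Z). \]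
   Context: Guided Random Greedy: set $S_0=\emptyset$. For $i=1,\dots,c$: let $M_i\subseteq\mathcal{N}\setminus(S_{i-1}\cup Z)$ be a set of size $k$ maximizing $\sum_{u\in M_i}\big(f(S_{i-1}\cup\{u\})-f(S_{i-1})\big)$; pick $u_i$ uniformly at random from $M_i$ and set $S_i=S_{i-1}\cup\{u_i\}$. For $i=c+1,\dots,k$: do the same but with $M_i\subseteq\mathcal{N}\setminus S_{i-1}$ (elements of $Z$ allowed). Submodularity: $f(A\cup\{s\})-f(A)\ge f(B\cup\{s\})-f(B)$ for $A\subseteq B$, $s\notin B$; non-negativity: $f\ge0$. *)

theory Defs
  imports "HOL-Probability.Probability_Mass_Function"
begin

definition nonneg_on :: "'a set \<Rightarrow> ('a set \<Rightarrow> real) \<Rightarrow> bool" where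
  "nonneg_on N f \<longleftrightarrow> (\<forall>A. A \<subseteq> N \<longrightarrow> 0 \<le> f A)"

definition submodular_on :: "'a set \<Rightarrow> ('a set \<Rightarrow> real) \<Rightarrow> bool" where
  "submodular_on N f \<longleftrightarrow>
     (\<forall>A B s. A \<subseteq> B \<and> B \<subseteq> N \<and> s \<in> N \<and> s \<notin> B \<longrightarrow>
        f (A \<union> {s}) - f A \<ge> f (B \<union> {s}) - f B)"

definition dummy_elem :: "'a set \<Rightarrow> ('a set \<Rightarrow> real) \<Rightarrow> 'a \<Rightarrow> bool" where
  "dummy_elem N f d \<longleftrightarrow> d \<in> N \<and> (\<forall>A. A \<subseteq> N \<longrightarrow> f (A \<union> {d}) = f A)"

definition marg :: "('a set \<Rightarrow> real) \<Rightarrow> 'a set \<Rightarrow> 'a \<Rightarrow> real" where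
  "marg f S u = f (S \<union> {u}) - f S"

definition is_max_block :: "('a set \<Rightarrow> real) \<Rightarrow> nat \<Rightarrow> 'a set \<Rightarrow> 'a set \<Rightarrow> 'a set \<Rightarrow> bool" where
  "is_max_block f k S Y M \<longleftrightarrow>
     M \<subseteq> Y \<and> card M = k \<and>
     (\<forall>M'. M' \<subseteq> Y \<and> card M' = k \<longrightarrow> sum (marg f S) M' \<le> sum (marg f S) M)"

definition valid_grg_rule ::
  "'a set \<Rightarrow> ('a set \<Rightarrow> real) \<Rightarrow> nat \<Rightarrow> nat \<Rightarrow> 'a set \<Rightarrow> (nat \<Rightarrow> 'a set \<Rightarrow> 'a set) \<Rightarrow> bool" where
  "valid_grg_rule N f k c Z sel \<longleftrightarrow>
     (\<forall>i S. 1 \<le> i \<and> i \<le> k \<and> S \<subseteq> N \<and> card S = i - 1 \<longrightarrow>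
        is_max_block f k S (if i \<le> c then N - (S \<union> Z) else N - S) (sel i S))"

fun grg :: "(nat \<Rightarrow> 'a set \<Rightarrow> 'a set) \<Rightarrow> nat \<Rightarrow> 'a set pmf" where
  "grg sel 0 = return_pmf {}"
| "grg sel (Suc i) =
     bind_pmf (grg sel i) (\<lambda>S. map_pmf (\<lambda>u. S \<union> {u}) (pmf_of_set (sel (Suc i) S)))"

end

theory Submission
  imports Defs
begin

text \<open>
  A step of Guided Random Greedy adds a uniformly random element of a block \<open>M\<close> of size \<open>k\<close>
  maximising the total marginal gain. Any admissible \<open>T\<close> with \<open>|T| \<le> k\<close>, padded with dummy
  elements, is a competing block whose total gain is at least \<open>f(S \<union> T) - f S\<close>, so
  \<open>E f(S(i+1)) \<ge> \<alpha> E f(S(i)) + E f(S(i) \<union> T) / k\<close>. On the other hand every element enters \<open>S(i)\<close>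
  with probability at most \<open>1/k\<close> per step, and by submodularity and non-negativity
  \<open>E f(S(i) \<union> A) \<ge> \<alpha>\<^sup>i f A\<close>. While \<open>S(i)\<close> avoids \<open>Z\<close>, submodularity gives
  \<open>f(S \<union> (OPT - Z)) \<ge> f(OPT - Z) + f(S \<union> OPT \<union> Z) - f(OPT \<union> Z)\<close>. Taking \<open>T = OPT - Z\<close> up to
  step \<open>c\<close> and \<open>T = OPT\<close> afterwards, the two resulting linear recurrences solve to the bounds.
\<close>

lemma submodular_on_diff_le_sum_marg:
  assumes sub: "submodular_on N f" and "finite M" "M \<subseteq> N" "B \<subseteq> N"
  shows "f (B \<union> M) - f B \<le> sum (marg f B) M"
  using assms(2,3)
proof (induction M rule: finite_induct)
  case empty
  then show ?case by simp
next
  case (insert x M)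
  then have IH: "f (B \<union> M) - f B \<le> sum (marg f B) M"
    by simp
  have "f (B \<union> insert x M) - f (B \<union> M) \<le> marg f B x"
  proof (cases "x \<in> B")
    case True
    then show ?thesis by (simp add: marg_def insert_absorb)
  next
    case False
    with insert have "x \<notin> B \<union> M" by auto
    moreover have "B \<union> M \<subseteq> N" "x \<in> N"
      using insert assms(4) by auto
    ultimately have "f ((B \<union> M) \<union> {x}) - f (B \<union> M) \<le> f (B \<union> {x}) - f B"
      using sub unfolding submodular_on_def by blast
    then show ?thesis by (simp add: marg_def)
  qed
  with IH insert show ?case by simp
qed

lemma submodular_on_gain_antimono:
  assumes sub: "submodular_on N f" and "A \<subseteq> C" "C \<subseteq> N" "finite X" "X \<subseteq> N"
    and "X \<inter> (C - A) = {}"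
  shows "f (C \<union> X) - f C \<le> f (A \<union> X) - f A"
  using assms(4,5,6)
proof (induction X rule: finite_induct)
  case empty
  then show ?case by simp
next
  case (insert x X)
  then have IH: "f (C \<union> X) - f C \<le> f (A \<union> X) - f A"
    by simp
  have "f (C \<union> insert x X) - f (C \<union> X) \<le> f (A \<union> insert x X) - f (A \<union> X)"
  proof (cases "x \<in> C")
    case True
    with insert have "x \<in> A" by auto
    with \<open>x \<in> C\<close> show ?thesis by (simp add: insert_absorb)
  next
    case False
    with insert have "x \<notin> C \<union> X" by auto
    moreover have "A \<union> X \<subseteq> C \<union> X" "C \<union> X \<subseteq> N" "x \<in> N"
      using insert assms(2,3) by auto
    ultimately have "f ((C \<union> X) \<union> {x}) - f (C \<union> X) \<le> f ((A \<union> X) \<union> {x}) - f (A \<union> X)"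
      using sub unfolding submodular_on_def by blast
    then show ?thesis by simp
  qed
  with IH show ?case by linarith
qed

lemma sum_insert_eq_card_plus_marg:
  "finite M \<Longrightarrow> (\<Sum>u\<in>M. f (B \<union> {u})) = real (card M) * f B + sum (marg f B) M"
  by (simp add: marg_def sum.distrib sum_subtractf)

locale guided_random_greedy =
  fixes N Z :: "'a set" and f :: "'a set \<Rightarrow> real" and k c :: nat
    and sel :: "nat \<Rightarrow> 'a set \<Rightarrow> 'a set" and D :: "'a set"
  assumes finite_N: "finite N" and nonneg: "nonneg_on N f" and submod: "submodular_on N f"
    and k_pos: "0 < k" and c_le_k: "c \<le> k" and Z_sub: "Z \<subseteq> N"
    and D_sub: "D \<subseteq> N - Z" and card_D: "2 * k \<le> card D"
    and dummy: "\<forall>d\<in>D. dummy_elem N f d"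
    and valid: "valid_grg_rule N f k c Z sel"
begin

abbreviation "\<alpha> \<equiv> 1 - 1 / real k"

lemma alpha_nonneg: "0 \<le> \<alpha>"
  using k_pos by (simp add: field_simps)

lemma sel_block:
  assumes "1 \<le> i" "i \<le> k" "S \<subseteq> N" "card S = i - 1"
  shows "sel i S \<subseteq> N - S" "card (sel i S) = k" "finite (sel i S)" "sel i S \<noteq> {}"
    and "i \<le> c \<Longrightarrow> sel i S \<inter> Z = {}"
    and "M \<subseteq> (if i \<le> c then N - (S \<union> Z) else N - S) \<Longrightarrow> card M = k \<Longrightarrow>
        sum (marg f S) M \<le> sum (marg f S) (sel i S)"
proof -
  have block: "is_max_block f k S (if i \<le> c then N - (S \<union> Z) else N - S) (sel i S)"
    using valid assms unfolding valid_grg_rule_def by blast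
  then show "sel i S \<subseteq> N - S" and card: "card (sel i S) = k"
    unfolding is_max_block_def by (auto split: if_splits)
  then show "finite (sel i S)"
    using finite_N finite_subset by blast
  show "sel i S \<noteq> {}"
    using card k_pos by auto
  show "i \<le> c \<Longrightarrow> sel i S \<inter> Z = {}"
    using block unfolding is_max_block_def by auto
  show "M \<subseteq> (if i \<le> c then N - (S \<union> Z) else N - S) \<Longrightarrow> card M = k \<Longrightarrow>
        sum (marg f S) M \<le> sum (marg f S) (sel i S)"
    using block unfolding is_max_block_def by blast
qed

lemma set_pmf_grg:
  "i \<le> k \<Longrightarrow> S \<in> set_pmf (grg sel i) \<Longrightarrow> S \<subseteq> N \<and> card S = i \<and> (i \<le> c \<longrightarrow> S \<inter> Z = {})"
proof (induction i arbitrary: S)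
  case 0
  then show ?case by simp
next
  case (Suc i)
  from Suc.prems(2) obtain S' u where S': "S' \<in> set_pmf (grg sel i)"
    and u: "u \<in> set_pmf (pmf_of_set (sel (Suc i) S'))" and S: "S = insert u S'"
    by auto
  have IH: "S' \<subseteq> N" "card S' = i" "i \<le> c \<longrightarrow> S' \<inter> Z = {}"
    using Suc.IH[OF _ S'] Suc.prems(1) by auto
  note block = sel_block[of "Suc i" S', simplified, OF Suc.prems(1) IH(1,2)]
  from u block have "u \<in> sel (Suc i) S'" by simp
  with block have "u \<in> N" "u \<notin> S'" "Suc i \<le> c \<Longrightarrow> u \<notin> Z" by auto
  moreover have "finite S'"
    using IH(1) finite_N finite_subset by blast
  ultimately show ?case using S IH by auto
qed

lemma finite_set_pmf_grg: "i \<le> k \<Longrightarrow> finite (set_pmf (grg sel i))"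
proof -
  assume "i \<le> k"
  then have "set_pmf (grg sel i) \<subseteq> Pow N"
    using set_pmf_grg by blast
  then show ?thesis
    using finite_N finite_subset by blast
qed

lemma integrable_grg: "i \<le> k \<Longrightarrow> integrable (measure_pmf (grg sel i)) (g :: 'a set \<Rightarrow> real)"
  by (simp add: finite_set_pmf_grg integrable_measure_pmf_finite)

lemma expectation_grg_mono:
  assumes "i \<le> k" "\<And>S. S \<in> set_pmf (grg sel i) \<Longrightarrow> g S \<le> h S"
  shows "measure_pmf.expectation (grg sel i) g \<le> measure_pmf.expectation (grg sel i) (h :: _ \<Rightarrow> real)"
  using assms by (intro integral_mono_AE integrable_grg) (auto simp: AE_measure_pmf_iff)

lemma expectation_grg_Suc:
  assumes "Suc i \<le> k"
  shows "measure_pmf.expectation (grg sel (Suc i)) h =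
    measure_pmf.expectation (grg sel i) (\<lambda>S. (\<Sum>u\<in>sel (Suc i) S. h (S \<union> {u})) / real k)"
proof -
  let ?A = "set_pmf (grg sel i)"
  have fin: "finite ?A"
    using finite_set_pmf_grg assms by simp
  have block: "finite (sel (Suc i) S)" "sel (Suc i) S \<noteq> {}" "card (sel (Suc i) S) = k"
    if "S \<in> ?A" for S
    using sel_block[of "Suc i" S] set_pmf_grg[of i S] that assms by auto
  have "measure_pmf.expectation (grg sel (Suc i)) h =
     (\<Sum>S\<in>?A. pmf (grg sel i) S *\<^sub>R measure_pmf.expectation
         (map_pmf (\<lambda>u. S \<union> {u}) (pmf_of_set (sel (Suc i) S))) h)"
    using block fin by (simp only: grg.simps, subst pmf_expectation_bind[of ?A]) auto
  also have "\<dots> = (\<Sum>S\<in>?A. pmf (grg sel i) S * ((\<Sum>u\<in>sel (Suc i) S. h (S \<union> {u})) / real k))"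
    by (rule sum.cong[OF refl]) (use block in \<open>simp add: integral_pmf_of_set\<close>)
  also have "\<dots> = measure_pmf.expectation (grg sel i) (\<lambda>S. (\<Sum>u\<in>sel (Suc i) S. h (S \<union> {u})) / real k)"
    using fin by (subst integral_measure_pmf[of ?A]) (auto simp: mult.commute)
  finally show ?thesis .
qed

text \<open>Padding with dummies is what makes \<open>T - S\<close> a competitor of full size \<open>k\<close>.\<close>

lemma exists_block_ge_gain:
  assumes "S \<subseteq> N" "card S < k" "T \<subseteq> N" "card T \<le> k" "T - S \<subseteq> Y" "D - S \<subseteq> Y"
  shows "\<exists>M. M \<subseteq> Y \<and> card M = k \<and> f (S \<union> T) - f S \<le> sum (marg f S) M"
proof -
  have fin_S: "finite S" and fin_T: "finite T"
    using assms(1,3) finite_N finite_subset by blast+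
  have fin_TS: "finite (T - S)"
    using fin_T by simp
  have card_TS: "card (T - S) \<le> k"
    using card_mono[OF fin_T Diff_subset, of S] assms(4) by linarith
  have "card D - card S \<le> card (D - S)"
    using diff_card_le_card_Diff[OF fin_S] by blast
  then have "k \<le> card (D - S)"
    using card_D assms(2) by linarith
  moreover have "card (D - S) - card (T - S) \<le> card ((D - S) - (T - S))"
    using diff_card_le_card_Diff[OF fin_TS] by blast
  ultimately have "k - card (T - S) \<le> card ((D - S) - (T - S))"
    by linarith
  then obtain X where X: "X \<subseteq> (D - S) - (T - S)" "card X = k - card (T - S)" "finite X"
    by (rule obtain_subset_with_card_n)
  have disj: "(T - S) \<inter> X = {}"
    using X(1) by blast
  have "marg f S d = 0" if "d \<in> X" for d
  proof -
    from that X(1) have "dummy_elem N f d"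
      using dummy by blast
    with assms(1) show ?thesis
      unfolding dummy_elem_def marg_def by simp
  qed
  then have sum_eq: "sum (marg f S) ((T - S) \<union> X) = sum (marg f S) (T - S)"
    by (simp add: sum.union_disjoint[OF fin_TS X(3) disj])
  show ?thesis
  proof (intro exI conjI)
    show "(T - S) \<union> X \<subseteq> Y"
      using X(1) assms(5,6) by blast
    show "card ((T - S) \<union> X) = k"
      using card_Un_disjoint[OF fin_TS X(3) disj] X(2) card_TS by simp
    have "f (S \<union> (T - S)) - f S \<le> sum (marg f S) (T - S)"
      using submodular_on_diff_le_sum_marg[OF submod fin_TS _ assms(1)] assms(3) by blast
    then show "f (S \<union> T) - f S \<le> sum (marg f S) ((T - S) \<union> X)"
      unfolding sum_eq by (simp add: Un_Diff_cancel)
  qed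
qed

lemma sum_sel_ge_gain:
  assumes "Suc i \<le> k" "S \<in> set_pmf (grg sel i)" "T \<subseteq> N" "card T \<le> k"
    and "Suc i \<le> c \<longrightarrow> T \<inter> Z = {}"
  shows "real k * f S + (f (S \<union> T) - f S) \<le> (\<Sum>u\<in>sel (Suc i) S. f (S \<union> {u}))"
proof -
  have S: "S \<subseteq> N" "card S = i"
    using set_pmf_grg[of i S] assms(1,2) by auto
  note block = sel_block[of "Suc i" S, simplified, OF assms(1) S]
  let ?Y = "if Suc i \<le> c then N - (S \<union> Z) else N - S"
  have "T - S \<subseteq> ?Y" "D - S \<subseteq> ?Y"
    using assms(3,5) D_sub by auto
  moreover have "card S < k"
    using S(2) assms(1) by simp
  ultimately obtain M where M: "M \<subseteq> ?Y" "card M = k" "f (S \<union> T) - f S \<le> sum (marg f S) M"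
    using exists_block_ge_gain[OF S(1) _ assms(3,4)] by blast
  then have "f (S \<union> T) - f S \<le> sum (marg f S) (sel (Suc i) S)"
    using block(6)[OF M(1,2)] by linarith
  then show ?thesis
    using sum_insert_eq_card_plus_marg[OF block(3), of f S] block(2) by simp
qed

lemma sum_sel_union_ge:
  assumes "Suc i \<le> k" "S \<in> set_pmf (grg sel i)" "A \<subseteq> N"
  shows "(real k - 1) * f (S \<union> A) \<le> (\<Sum>u\<in>sel (Suc i) S. f (S \<union> {u} \<union> A))"
proof -
  have S: "S \<subseteq> N" "card S = i"
    using set_pmf_grg[of i S] assms(1,2) by auto
  note block = sel_block[of "Suc i" S, simplified, OF assms(1) S]
  let ?B = "S \<union> A"
  have B: "?B \<subseteq> N" "?B \<union> sel (Suc i) S \<subseteq> N"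
    using S assms(3) block(1) by auto
  have "f (?B \<union> sel (Suc i) S) - f ?B \<le> sum (marg f ?B) (sel (Suc i) S)"
    using submodular_on_diff_le_sum_marg[OF submod block(3) _ B(1)] block(1) by auto
  moreover have "0 \<le> f (?B \<union> sel (Suc i) S)"
    using nonneg B(2) unfolding nonneg_on_def by blast
  ultimately have "(real k - 1) * f ?B \<le> real k * f ?B + sum (marg f ?B) (sel (Suc i) S)"
    by (simp add: left_diff_distrib)
  also have "\<dots> = (\<Sum>u\<in>sel (Suc i) S. f (?B \<union> {u}))"
    using sum_insert_eq_card_plus_marg[OF block(3), of f ?B] block(2) by simp
  also have "\<dots> = (\<Sum>u\<in>sel (Suc i) S. f (S \<union> {u} \<union> A))"
    by (intro sum.cong refl arg_cong[where f = f]) auto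
  finally show ?thesis .
qed

lemma expectation_grg_Suc_ge_gain:
  assumes "Suc i \<le> k" "T \<subseteq> N" "card T \<le> k" "Suc i \<le> c \<longrightarrow> T \<inter> Z = {}"
  shows "\<alpha> * measure_pmf.expectation (grg sel i) f
       + measure_pmf.expectation (grg sel i) (\<lambda>S. f (S \<union> T)) / real k
     \<le> measure_pmf.expectation (grg sel (Suc i)) f"
proof -
  have "\<alpha> * measure_pmf.expectation (grg sel i) f
          + measure_pmf.expectation (grg sel i) (\<lambda>S. f (S \<union> T)) / real k
      = measure_pmf.expectation (grg sel i) (\<lambda>S. (real k * f S + (f (S \<union> T) - f S)) / real k)"
    using k_pos assms(1) by (simp add: integrable_grg field_simps)
  also have "\<dots> \<le> measure_pmf.expectation (grg sel i) (\<lambda>S. (\<Sum>u\<in>sel (Suc i) S. f (S \<union> {u})) / real k)"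
    using sum_sel_ge_gain[OF assms(1) _ assms(2-4)] assms(1)
    by (intro expectation_grg_mono divide_right_mono) auto
  also have "\<dots> = measure_pmf.expectation (grg sel (Suc i)) f"
    using expectation_grg_Suc[OF assms(1)] by simp
  finally show ?thesis .
qed

lemma expectation_grg_Suc_union_ge:
  assumes "Suc i \<le> k" "A \<subseteq> N"
  shows "\<alpha> * measure_pmf.expectation (grg sel i) (\<lambda>S. f (S \<union> A))
     \<le> measure_pmf.expectation (grg sel (Suc i)) (\<lambda>S. f (S \<union> A))"
proof -
  have "\<alpha> * f (S \<union> A) \<le> (\<Sum>u\<in>sel (Suc i) S. f (S \<union> {u} \<union> A)) / real k"
    if "S \<in> set_pmf (grg sel i)" for S
  proof -
    have "\<alpha> * f (S \<union> A) = (real k - 1) * f (S \<union> A) / real k"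
      using k_pos by (simp add: field_simps)
    also have "\<dots> \<le> (\<Sum>u\<in>sel (Suc i) S. f (S \<union> {u} \<union> A)) / real k"
      using sum_sel_union_ge[OF assms(1) that assms(2)] by (simp add: divide_right_mono)
    finally show ?thesis .
  qed
  then have "measure_pmf.expectation (grg sel i) (\<lambda>S. \<alpha> * f (S \<union> A))
      \<le> measure_pmf.expectation (grg sel i) (\<lambda>S. (\<Sum>u\<in>sel (Suc i) S. f (S \<union> {u} \<union> A)) / real k)"
    using assms(1) by (intro expectation_grg_mono) auto
  then show ?thesis
    using expectation_grg_Suc[OF assms(1)] by simp
qed

lemma expectation_grg_union_ge_power:
  assumes "A \<subseteq> N" "j + m \<le> k"
  shows "\<alpha> ^ m * measure_pmf.expectation (grg sel j) (\<lambda>S. f (S \<union> A))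
     \<le> measure_pmf.expectation (grg sel (j + m)) (\<lambda>S. f (S \<union> A))"
  using assms(2)
proof (induction m)
  case 0
  then show ?case by simp
next
  case (Suc m)
  have "\<alpha> ^ Suc m * measure_pmf.expectation (grg sel j) (\<lambda>S. f (S \<union> A))
      \<le> \<alpha> * measure_pmf.expectation (grg sel (j + m)) (\<lambda>S. f (S \<union> A))"
    using mult_left_mono[OF Suc.IH alpha_nonneg] Suc.prems by (simp add: mult.assoc)
  also have "\<dots> \<le> measure_pmf.expectation (grg sel (Suc (j + m))) (\<lambda>S. f (S \<union> A))"
    using expectation_grg_Suc_union_ge Suc.prems assms(1) by simp
  finally show ?case by simp
qed

lemma expectation_grg_union_ge:
  assumes "i \<le> k" "A \<subseteq> C" "C \<subseteq> N" "\<And>S. S \<in> set_pmf (grg sel i) \<Longrightarrow> S \<inter> (C - A) = {}"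
  shows "f A - (1 - \<alpha> ^ i) * f C \<le> measure_pmf.expectation (grg sel i) (\<lambda>S. f (S \<union> A))"
proof -
  have "f A - (1 - \<alpha> ^ i) * f C \<le> measure_pmf.expectation (grg sel i) (\<lambda>S. f (S \<union> C)) + (f A - f C)"
    using expectation_grg_union_ge_power[OF assms(3), of 0 i] assms(1) by (simp add: algebra_simps)
  also have "\<dots> = measure_pmf.expectation (grg sel i) (\<lambda>S. f (S \<union> C) + (f A - f C))"
    using assms(1) by (simp add: integrable_grg)
  also have "\<dots> \<le> measure_pmf.expectation (grg sel i) (\<lambda>S. f (S \<union> A))"
  proof (rule expectation_grg_mono[OF assms(1)])
    fix S assume S: "S \<in> set_pmf (grg sel i)"
    then have "S \<subseteq> N"
      using set_pmf_grg assms(1) by blast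
    moreover from this have "finite S"
      using finite_N finite_subset by blast
    ultimately have "f (C \<union> S) - f C \<le> f (A \<union> S) - f A"
      using submodular_on_gain_antimono[OF submod assms(2,3)] assms(4)[OF S] by blast
    then show "f (S \<union> C) + (f A - f C) \<le> f (S \<union> A)"
      by (simp add: Un_commute)
  qed
  finally show ?thesis .
qed

lemma expectation_grg_ge_phase1:
  assumes T: "T \<subseteq> N" "card T \<le> k" and "i \<le> c"
  shows "(1 - \<alpha> ^ i) * f (T - Z) - (1 - \<alpha> ^ i - real i / real k * \<alpha> ^ (i - 1)) * f (T \<union> Z)
           + \<alpha> ^ i * f {}
         \<le> measure_pmf.expectation (grg sel i) f"
  using assms(3)
proof (induction i)
  case 0
  then show ?case by simp
next
  case (Suc i)
  let ?E = "\<lambda>i g. measure_pmf.expectation (grg sel i) g"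
  let ?L = "\<lambda>i. (1 - \<alpha> ^ i) * f (T - Z) - (1 - \<alpha> ^ i - real i / real k * \<alpha> ^ (i - 1)) * f (T \<union> Z)
      + \<alpha> ^ i * f {}"
  let ?G = "f (T - Z) - (1 - \<alpha> ^ i) * f (T \<union> Z)"
  have ik: "Suc i \<le> k"
    using Suc.prems c_le_k by simp
  have card: "card (T - Z) \<le> k"
    using T card_mono[of T "T - Z"] finite_N finite_subset by fastforce
  have "(1 - (1 - 1 / r) ^ Suc i) * x - (1 - (1 - 1 / r) ^ Suc i - real (Suc i) / r * (1 - 1 / r) ^ i) * y
        + (1 - 1 / r) ^ Suc i * z
      = (1 - 1 / r) * ((1 - (1 - 1 / r) ^ i) * x
          - (1 - (1 - 1 / r) ^ i - real i / r * (1 - 1 / r) ^ (i - 1)) * y + (1 - 1 / r) ^ i * z)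
        + (x - (1 - (1 - 1 / r) ^ i) * y) / r" if "0 < r" for r x y z :: real
    using that by (cases i) (simp_all add: field_simps)
  then have "?L (Suc i) = \<alpha> * ?L i + ?G / real k"
    using k_pos by simp
  also have "\<dots> \<le> \<alpha> * ?E i f + ?E i (\<lambda>S. f (S \<union> (T - Z))) / real k"
  proof (intro add_mono mult_left_mono divide_right_mono alpha_nonneg)
    show "?L i \<le> ?E i f"
      using Suc by simp
    show "?G \<le> ?E i (\<lambda>S. f (S \<union> (T - Z)))"
      using set_pmf_grg[of i] ik Suc.prems T Z_sub by (intro expectation_grg_union_ge) auto
  qed simp
  also have "\<dots> \<le> ?E (Suc i) f"
    by (rule expectation_grg_Suc_ge_gain[OF ik _ card]) (use T in auto)
  finally show ?case .
qed

lemma expectation_grg_ge_phase2_offset: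
  assumes T: "T \<subseteq> N" "card T \<le> k" and "c + m \<le> k"
  shows "real m / real k * \<alpha> ^ (m - 1) * (f T - (1 - \<alpha> ^ c) * f (T \<union> Z))
         \<le> measure_pmf.expectation (grg sel (c + m)) f"
  using assms(3)
proof (induction m)
  case 0
  have "0 \<le> measure_pmf.expectation (grg sel c) f"
    using set_pmf_grg c_le_k nonneg unfolding nonneg_on_def
    by (intro integral_nonneg_AE) (auto simp: AE_measure_pmf_iff)
  then show ?case by simp
next
  case (Suc m)
  let ?E = "\<lambda>i g. measure_pmf.expectation (grg sel i) g"
  let ?G = "f T - (1 - \<alpha> ^ c) * f (T \<union> Z)"
  have ik: "Suc (c + m) \<le> k"
    using Suc.prems by simp
  have "?G \<le> ?E c (\<lambda>S. f (S \<union> T))"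
    using set_pmf_grg[of c] c_le_k T Z_sub by (intro expectation_grg_union_ge) auto
  then have "\<alpha> ^ m * ?G \<le> \<alpha> ^ m * ?E c (\<lambda>S. f (S \<union> T))"
    using alpha_nonneg by (simp add: mult_left_mono)
  also have "\<dots> \<le> ?E (c + m) (\<lambda>S. f (S \<union> T))"
    using expectation_grg_union_ge_power[OF T(1), of c m] ik by simp
  finally have decayed: "\<alpha> ^ m * ?G \<le> ?E (c + m) (\<lambda>S. f (S \<union> T))" .
  have "real (Suc m) / r * a ^ (Suc m - 1) * g = a * (real m / r * a ^ (m - 1) * g) + a ^ m * g / r"
    for a r g :: real
    by (cases m) (simp_all add: add_divide_distrib[symmetric] algebra_simps)
  then have "real (Suc m) / real k * \<alpha> ^ (Suc m - 1) * ?G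
      = \<alpha> * (real m / real k * \<alpha> ^ (m - 1) * ?G) + \<alpha> ^ m * ?G / real k" .
  also have "\<dots> \<le> \<alpha> * ?E (c + m) f + ?E (c + m) (\<lambda>S. f (S \<union> T)) / real k"
    using Suc ik decayed by (intro add_mono mult_left_mono divide_right_mono alpha_nonneg) simp_all
  also have "\<dots> \<le> ?E (Suc (c + m)) f"
    by (rule expectation_grg_Suc_ge_gain[OF ik T]) simp
  finally show ?case by simp
qed

lemma expectation_grg_ge_phase2:
  assumes T: "T \<subseteq> N" "card T \<le> k" and "c + 1 \<le> i" "i \<le> k"
  shows "real (i - c) / real k * \<alpha> ^ (i - c - 1) * f T
           - real (i - c) / real k * (\<alpha> ^ (i - c - 1) - \<alpha> ^ (i - 1)) * f (T \<union> Z)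
         \<le> measure_pmf.expectation (grg sel i) f"
proof -
  define m where "m = i - c"
  have i: "i = c + m" "i - 1 = (m - 1) + c"
    using assms(3) unfolding m_def by simp_all
  have "real (i - c) / real k * \<alpha> ^ (i - c - 1) * f T
          - real (i - c) / real k * (\<alpha> ^ (i - c - 1) - \<alpha> ^ (i - 1)) * f (T \<union> Z)
        = real m / real k * \<alpha> ^ (m - 1) * (f T - (1 - \<alpha> ^ c) * f (T \<union> Z))"
    unfolding m_def[symmetric] i(2) power_add by (simp add: algebra_simps add_divide_distrib)
  then show ?thesis
    using expectation_grg_ge_phase2_offset[OF T, of m] assms(4) i(1) by simp
qed

end

theorem mainTheorem5:
  fixes N Z :: "'a set" and f :: "'a set \<Rightarrow> real" and k :: nat and t_s :: real
    and OPT :: "'a set" and sel :: "nat \<Rightarrow> 'a set \<Rightarrow> 'a set"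
  assumes "finite N"
    and "nonneg_on N f" and "submodular_on N f"
    and "0 < k"
    and "0 \<le> t_s" and "t_s \<le> 1"
    and "Z \<subseteq> N"
    and "\<exists>D. D \<subseteq> N - Z \<and> card D \<ge> 2 * k \<and> (\<forall>d\<in>D. dummy_elem N f d)"
    and "OPT \<subseteq> N" and "card OPT \<le> k"
    and "\<forall>T. T \<subseteq> N \<and> card T \<le> k \<longrightarrow> f T \<le> f OPT"
    and "valid_grg_rule N f k (nat \<lceil>t_s * real k\<rceil>) Z sel"
  shows "let c = nat \<lceil>t_s * real k\<rceil>; \<alpha> = 1 - 1 / real k in
    (\<forall>i. 1 \<le> i \<and> i \<le> c \<longrightarrow>
       measure_pmf.expectation (grg sel i) f \<ge>
         (1 - \<alpha> ^ i) * f (OPT - Z)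
         - (1 - \<alpha> ^ i - real i / real k * \<alpha> ^ (i - 1)) * f (OPT \<union> Z)
         + \<alpha> ^ i * f {}) \<and>
    (\<forall>i. c + 1 \<le> i \<and> i \<le> k \<longrightarrow>
       measure_pmf.expectation (grg sel i) f \<ge>
         real (i - c) / real k * \<alpha> ^ (i - c - 1) * f OPT
         - real (i - c) / real k * (\<alpha> ^ (i - c - 1) - \<alpha> ^ (i - 1)) * f (OPT \<union> Z))"
proof -
  obtain D where D: "D \<subseteq> N - Z" "2 * k \<le> card D" "\<forall>d\<in>D. dummy_elem N f d"
    using assms(8) by blast
  define c where "c = nat \<lceil>t_s * real k\<rceil>"
  have "c \<le> k"
    using assms(6) mult_right_mono[of t_s 1 "real k"] unfolding c_def by (simp add: ceiling_le)
  then interpret guided_random_greedy N Z f k c sel D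
    using assms D unfolding c_def by unfold_locales auto
  show ?thesis
    unfolding Let_def c_def[symmetric]
    using expectation_grg_ge_phase1[OF assms(9,10)] expectation_grg_ge_phase2[OF assms(9,10)] by auto
qed

end
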